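(* Fix a positive integer $k$. Consider either of the following two cases. (Squared case) Fix $m$ tuples $(\beta_i,\gamma_i,\delta_i)$ of positive reals and let $B_i=1+\beta_i+\frac1{\gamma_i}$, $C_i=1+\gamma_i+\frac1{\delta_i}$, $D_i=1+\delta_i+\frac1{\beta_i}$ ($1\le i\le m$). Let $P_{\mathrm{low}}$ be the linear program: maximize $\sum_{j=1}^k\alpha_j$ subject to $f+\sum_{j=1}^k d_j\le1$; $\alpha_j\le\alpha_{j+1}$ ($1\le j<k$); $\alpha_j\le B_i\alpha_l+C_id_j+D_id_l$ ($1\le j,l\le k$, $1\le i\le m$); $x_{jl}\ge\alpha_j-d_l$ ($1\le j\le l\le k$); $\sum_{l=j}^k x_{jl}\le f$ ($1\le j\le k$); $\alpha_j,d_j,f,x_{jl}\ge0$. (Metric case) Let $P_{\mathrm{low}}$ be the same program with the constraints $\alpha_j\le B_i\alpha_l+C_id_j+D_id_l$ replaced by $\alpha_j\le\alpha_l+d_j+d_l$ ($1\le j,l\le k$). In either case let $P_{\mathrm{up}}$ be the program obtained from $P_{\mathrm{low}}$ by imposing $x_{jl}\ge\alpha_j-d_l$ only for $1\le j<l\le k$ (the variables $x_{jj}$ remain in $\sum_{l=j}^kx_{jl}\le f$ and are only required to be non-negative). Let $z_k$ be the optimal value of $P_{\mathrm{low}}$, and let $(\boldsymbol\alpha,\mathbf d,\mathbf x,f)$ be an optimal solution of $P_{\mathrm{up}}$, with value $x_k$. If $\varepsilon=\max_j\{\alpha_j-d_j\}$, then $z_k\ge\frac{1}{1+\varepsilon}x_k$.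 *)

theory Defs
  imports Complex_Main
begin

text \<open>T is the set of coefficient triples (B,C,D) used in the "triangle" constraints
  alpha_j <= B alpha_l + C d_j + D d_l.\<close>

definition lp_common ::
  "nat \<Rightarrow> (real \<times> real \<times> real) set \<Rightarrow> (nat \<Rightarrow> real) \<Rightarrow> (nat \<Rightarrow> real)
     \<Rightarrow> (nat \<Rightarrow> nat \<Rightarrow> real) \<Rightarrow> real \<Rightarrow> bool" where
  "lp_common k T alpha d x f \<longleftrightarrow>
     f + (\<Sum>j=1..k. d j) \<le> 1
   \<and> (\<forall>j. 1 \<le> j \<and> j < k \<longrightarrow> alpha j \<le> alpha (j+1))
   \<and> (\<forall>j\<in>{1..k}. \<forall>l\<in>{1..k}. \<forall>(B,C,D)\<in>T. alpha j \<le> B * alpha l + C * d j + D * d l)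
   \<and> (\<forall>j\<in>{1..k}. (\<Sum>l=j..k. x j l) \<le> f)
   \<and> (\<forall>j\<in>{1..k}. alpha j \<ge> 0 \<and> d j \<ge> 0)
   \<and> f \<ge> 0
   \<and> (\<forall>j\<in>{1..k}. \<forall>l\<in>{j..k}. x j l \<ge> 0)"

definition lp_low_feasible where
  "lp_low_feasible k T alpha d x f \<longleftrightarrow> lp_common k T alpha d x f
     \<and> (\<forall>j\<in>{1..k}. \<forall>l\<in>{j..k}. x j l \<ge> alpha j - d l)"

definition lp_up_feasible where
  "lp_up_feasible k T alpha d x f \<longleftrightarrow> lp_common k T alpha d x f
     \<and> (\<forall>j\<in>{1..k}. \<forall>l\<in>{j<..k}. x j l \<ge> alpha j - d l)"

definition lp_obj :: "nat \<Rightarrow> (nat \<Rightarrow> real) \<Rightarrow> real" where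
  "lp_obj k alpha = (\<Sum>j=1..k. alpha j)"

definition lp_low_value :: "nat \<Rightarrow> (real \<times> real \<times> real) set \<Rightarrow> real" where
  "lp_low_value k T = Sup {lp_obj k alpha | alpha d x f. lp_low_feasible k T alpha d x f}"

definition lp_up_optimal where
  "lp_up_optimal k T alpha d x f \<longleftrightarrow> lp_up_feasible k T alpha d x f
     \<and> (\<forall>alpha' d' x' f'. lp_up_feasible k T alpha' d' x' f' \<longrightarrow> lp_obj k alpha' \<le> lp_obj k alpha)"

definition squared_coeffs ::
  "nat \<Rightarrow> (nat \<Rightarrow> real) \<Rightarrow> (nat \<Rightarrow> real) \<Rightarrow> (nat \<Rightarrow> real) \<Rightarrow> (real \<times> real \<times> real) set" where
  "squared_coeffs m \<beta> \<gamma> \<delta> =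
     (\<lambda>i. (1 + \<beta> i + 1 / \<gamma> i, 1 + \<gamma> i + 1 / \<delta> i, 1 + \<delta> i + 1 / \<beta> i)) ` {1..m}"

definition metric_coeffs :: "(real \<times> real \<times> real) set" where
  "metric_coeffs = {(1, 1, 1)}"

end

theory Submission
  imports Defs
begin

text \<open>An optimal solution of the relaxed program P_up can be turned into a feasible solution of
  P_low: the missing constraints x_jj \<ge> alpha_j - d_j are repaired by adding \<epsilon> to every x_jj and
  to f, which breaks only the budget constraint f + \<Sum> d \<le> 1, and only up to 1 + \<epsilon>. Dividing
  every variable by 1 + \<epsilon> restores the budget, and all other constraints are homogeneous, so
  the objective drops by exactly the factor 1 + \<epsilon>. That \<epsilon> \<ge> 0 follows from optimality: if
  alpha_k < d_k, raising alpha_k to d_k keeps P_up feasible, since the coefficient C of d_j in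
  the triangle constraints is at least 1.\<close>

lemma lp_common_triangle:
  assumes "lp_common k T alpha d x f" "j \<in> {1..k}" "l \<in> {1..k}" "(B, C, D) \<in> T"
  shows "alpha j \<le> B * alpha l + C * d j + D * d l"
  using assms unfolding lp_common_def by fast

lemma squared_or_metric_coeffs_bounds:
  assumes "(\<exists>m \<beta> \<gamma> \<delta>. m \<ge> 1 \<and> (\<forall>i\<in>{1..m}. \<beta> i > 0 \<and> \<gamma> i > 0 \<and> \<delta> i > 0)
            \<and> T = squared_coeffs m \<beta> \<gamma> \<delta>) \<or> T = metric_coeffs"
    and "(B, C, D) \<in> T"
  shows "0 \<le> B \<and> 1 \<le> C \<and> 0 \<le> D"
  using assms by (force simp: squared_coeffs_def metric_coeffs_def add_nonneg_nonneg less_imp_le)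

lemma lp_low_feasible_alpha_le_1:
  assumes F: "lp_low_feasible k T alpha d x f" and j: "j \<in> {1..k}"
  shows "alpha j \<le> 1"
proof -
  have "d j \<le> (\<Sum>j=1..k. d j)"
    by (rule member_le_sum) (use F j in \<open>auto simp: lp_low_feasible_def lp_common_def\<close>)
  then have budget: "f + d j \<le> 1"
    using F by (auto simp: lp_low_feasible_def lp_common_def)
  have "alpha j - d j \<le> x j j"
    using F j by (auto simp: lp_low_feasible_def)
  also have "x j j \<le> (\<Sum>l=j..k. x j l)"
    by (rule member_le_sum) (use F j in \<open>auto simp: lp_low_feasible_def lp_common_def\<close>)
  also have "\<dots> \<le> f"
    using F j by (auto simp: lp_low_feasible_def lp_common_def)
  finally show ?thesis using budget by simp
qed

lemma lp_obj_le_lp_low_value: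
  assumes "lp_low_feasible k T alpha d x f"
  shows "lp_obj k alpha \<le> lp_low_value k T"
  unfolding lp_low_value_def
proof (rule cSup_upper)
  show "lp_obj k alpha \<in> {lp_obj k alpha | alpha d x f. lp_low_feasible k T alpha d x f}"
    using assms by blast
  show "bdd_above {lp_obj k alpha | alpha d x f. lp_low_feasible k T alpha d x f}"
  proof (rule bdd_aboveI[where M = "real k"], clarsimp)
    fix alpha' d' x' f' assume "lp_low_feasible k T alpha' d' x' f'"
    then have "(\<Sum>j=1..k. alpha' j) \<le> (\<Sum>j=1..k. 1)"
      by (intro sum_mono) (rule lp_low_feasible_alpha_le_1)
    then show "lp_obj k alpha' \<le> real k" by (simp add: lp_obj_def)
  qed
qed

lemma lp_up_feasible_raise_last_alpha:
  assumes up: "lp_up_feasible k T alpha d x f"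
    and T: "\<And>B C D. (B, C, D) \<in> T \<Longrightarrow> 0 \<le> B \<and> 1 \<le> C \<and> 0 \<le> D"
    and le: "alpha k \<le> d k"
  shows "lp_up_feasible k T (alpha(k := d k)) d x f"
proof -
  let ?a = "alpha(k := d k)"
  have ge: "alpha l \<le> ?a l" for l using le by simp
  have nonneg: "0 \<le> alpha j" "0 \<le> d j" if "j \<in> {1..k}" for j
    using up that by (auto simp: lp_up_feasible_def lp_common_def)
  have tri: "?a j \<le> B * ?a l + C * d j + D * d l"
    if j: "j \<in> {1..k}" and l: "l \<in> {1..k}" and t: "(B, C, D) \<in> T" for j l B C D
  proof (cases "j = k")
    case True
    have "d j \<le> C * d j" using T[OF t] nonneg[OF j] by (simp add: mult_le_cancel_right1)
    moreover have "0 \<le> B * ?a l" "0 \<le> D * d l"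
      using T[OF t] nonneg[OF l] ge[of l] by auto
    ultimately show ?thesis using True by simp
  next
    case False
    have "alpha j \<le> B * alpha l + C * d j + D * d l"
      using up j l t by (intro lp_common_triangle) (auto simp: lp_up_feasible_def)
    moreover have "B * alpha l \<le> B * ?a l" using T[OF t] ge by (simp add: mult_left_mono)
    ultimately show ?thesis using False by simp
  qed
  have "\<forall>j\<in>{1..k}. \<forall>l\<in>{1..k}. \<forall>(B, C, D)\<in>T. ?a j \<le> B * ?a l + C * d j + D * d l"
    using tri by blast
  then show ?thesis
    using up le nonneg unfolding lp_up_feasible_def lp_common_def by auto
qed

lemma lp_up_optimal_last_alpha_ge_d:
  assumes opt: "lp_up_optimal k T alpha d x f" and "k \<ge> 1"
    and T: "\<And>B C D. (B, C, D) \<in> T \<Longrightarrow> 0 \<le> B \<and> 1 \<le> C \<and> 0 \<le> D"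
  shows "d k \<le> alpha k"
proof (rule ccontr)
  assume less: "\<not> d k \<le> alpha k"
  have "lp_up_feasible k T (alpha(k := d k)) d x f"
    using opt less by (intro lp_up_feasible_raise_last_alpha T) (auto simp: lp_up_optimal_def)
  then have "lp_obj k (alpha(k := d k)) \<le> lp_obj k alpha"
    using opt unfolding lp_up_optimal_def by blast
  moreover have "lp_obj k (alpha(k := d k)) = lp_obj k alpha + (d k - alpha k)"
  proof -
    have "(alpha(k := d k)) j = alpha j + (if j = k then d k - alpha k else 0)" for j
      by simp
    then show ?thesis
      using \<open>k \<ge> 1\<close> by (simp add: lp_obj_def sum.distrib sum.delta')
  qed
  ultimately show False using less by simp
qed

lemma lp_up_feasible_repair_diagonal_and_scale:
  assumes up: "lp_up_feasible k T alpha d x f"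
    and eps: "0 \<le> \<epsilon>" "\<And>j. j \<in> {1..k} \<Longrightarrow> alpha j - d j \<le> \<epsilon>"
  defines "s \<equiv> 1 + \<epsilon>"
  shows "lp_low_feasible k T (\<lambda>j. alpha j / s) (\<lambda>j. d j / s)
           (\<lambda>j l. (x j l + (if l = j then \<epsilon> else 0)) / s) ((f + \<epsilon>) / s)"
  unfolding lp_low_feasible_def lp_common_def
proof (intro conjI)
  have s: "s > 0" using eps by (simp add: s_def)
  have C: "lp_common k T alpha d x f" using up by (simp add: lp_up_feasible_def)
  have "(f + \<epsilon> + (\<Sum>j=1..k. d j)) / s \<le> s / s"
    using C s by (intro divide_right_mono) (auto simp: s_def lp_common_def)
  then show "(f + \<epsilon>) / s + (\<Sum>j=1..k. d j / s) \<le> 1"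
    using s by (simp add: sum_divide_distrib[symmetric] add_divide_distrib)
  show "\<forall>j. 1 \<le> j \<and> j < k \<longrightarrow> alpha j / s \<le> alpha (j + 1) / s"
    using C s by (auto simp: lp_common_def divide_right_mono)
  show "\<forall>j\<in>{1..k}. \<forall>l\<in>{1..k}. \<forall>(B, C, D)\<in>T.
          alpha j / s \<le> B * (alpha l / s) + C * (d j / s) + D * (d l / s)"
  proof (intro ballI, clarify)
    fix j l B C D assume "j \<in> {1..k}" "l \<in> {1..k}" "(B, C, D) \<in> T"
    then have "alpha j / s \<le> (B * alpha l + C * d j + D * d l) / s"
      using s C by (intro divide_right_mono lp_common_triangle) auto
    then show "alpha j / s \<le> B * (alpha l / s) + C * (d j / s) + D * (d l / s)"
      by (simp add: add_divide_distrib)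
  qed
  show "\<forall>j\<in>{1..k}. (\<Sum>l=j..k. (x j l + (if l = j then \<epsilon> else 0)) / s) \<le> (f + \<epsilon>) / s"
  proof
    fix j assume j: "j \<in> {1..k}"
    have "(\<Sum>l=j..k. x j l + (if l = j then \<epsilon> else 0)) = (\<Sum>l=j..k. x j l) + \<epsilon>"
      using j by (simp add: sum.distrib)
    also have "\<dots> \<le> f + \<epsilon>" using C j by (simp add: lp_common_def)
    finally show "(\<Sum>l=j..k. (x j l + (if l = j then \<epsilon> else 0)) / s) \<le> (f + \<epsilon>) / s"
      using s by (simp add: sum_divide_distrib[symmetric] divide_right_mono)
  qed
  show "\<forall>j\<in>{1..k}. 0 \<le> alpha j / s \<and> 0 \<le> d j / s"
    using C s by (auto simp: lp_common_def)
  show "0 \<le> (f + \<epsilon>) / s" using C s eps by (simp add: lp_common_def)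
  show "\<forall>j\<in>{1..k}. \<forall>l\<in>{j..k}. 0 \<le> (x j l + (if l = j then \<epsilon> else 0)) / s"
    using C s eps by (auto simp: lp_common_def)
  show "\<forall>j\<in>{1..k}. \<forall>l\<in>{j..k}. alpha j / s - d l / s \<le> (x j l + (if l = j then \<epsilon> else 0)) / s"
  proof (intro ballI)
    fix j l assume j: "j \<in> {1..k}" and l: "l \<in> {j..k}"
    have "alpha j - d l \<le> x j l + (if l = j then \<epsilon> else 0)"
    proof (cases "l = j")
      case True
      have "0 \<le> x j j" using C j by (auto simp: lp_common_def)
      then show ?thesis using True eps(2)[OF j] by simp
    next
      case False
      then have "l \<in> {j<..k}" using l by auto
      then show ?thesis using up j False by (auto simp: lp_up_feasible_def)
    qed
    then show "alpha j / s - d l / s \<le> (x j l + (if l = j then \<epsilon> else 0)) / s"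
      using s by (simp add: diff_divide_distrib[symmetric] divide_right_mono)
  qed
qed

theorem lemma9:
  fixes k :: nat and T :: "(real \<times> real \<times> real) set"
    and alpha d :: "nat \<Rightarrow> real" and x :: "nat \<Rightarrow> nat \<Rightarrow> real" and f :: real
  assumes "k \<ge> 1"
    and "(\<exists>m \<beta> \<gamma> \<delta>. m \<ge> 1 \<and> (\<forall>i\<in>{1..m}. \<beta> i > 0 \<and> \<gamma> i > 0 \<and> \<delta> i > 0)
            \<and> T = squared_coeffs m \<beta> \<gamma> \<delta>) \<or> T = metric_coeffs"
    and "lp_up_optimal k T alpha d x f"
  shows "lp_low_value k T \<ge> lp_obj k alpha / (1 + Max ((\<lambda>j. alpha j - d j) ` {1..k}))"
proof -
  define \<epsilon> where "\<epsilon> = Max ((\<lambda>j. alpha j - d j) ` {1..k})"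
  have eps_ge: "alpha j - d j \<le> \<epsilon>" if "j \<in> {1..k}" for j
    using that by (simp add: \<epsilon>_def)
  have "d k \<le> alpha k"
    by (rule lp_up_optimal_last_alpha_ge_d[OF assms(3,1)])
      (rule squared_or_metric_coeffs_bounds[OF assms(2)])
  then have eps_nonneg: "0 \<le> \<epsilon>" using eps_ge[of k] \<open>k \<ge> 1\<close> by simp
  have up: "lp_up_feasible k T alpha d x f"
    using assms(3) by (simp add: lp_up_optimal_def)
  have "lp_obj k (\<lambda>j. alpha j / (1 + \<epsilon>)) \<le> lp_low_value k T"
    by (rule lp_obj_le_lp_low_value
        [OF lp_up_feasible_repair_diagonal_and_scale[OF up eps_nonneg eps_ge]])
  then show ?thesis
    by (simp add: lp_obj_def sum_divide_distrib \<epsilon>_def)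
qed

end
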